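(* Let $G=(V,E)$ be a directed graph with a partition $R_1,\dots,R_k$ of $V$, let $A$ be a scheduling algorithm, $f\in\mathbb{N}$, $\ell=2f+1$, and let $(G',P,A')$ be the partitioned Byzantine reinforcement described in the context. Let $F'\subseteq V'$ be the set of faulty nodes, which may behave arbitrarily. Suppose that for each $k'\in[k]$ there are at least $f+1$ indices $i\in[\ell]$ with $\{v_i : v\in R_{k'}\}\cap F'=\emptyset$. Then $A'$ simulates $A$: for each $v\in V$, a strict majority of the copies $v_i$, $i\in[\ell]$, compute in every round the state of $v$ in the fault-free execution of $A$.
   Context: Model: a synchronous network is a directed graph $G=(V,E)$. A scheduling algorithm $A$ assigns a state to each node; in each round each node may receive environment input, decides from its state which message (if any) to send on each outgoing link, and updates its state from messages received on incoming links. Write $[\ell]=\{1,\dots,\ell\}$. Partitioned Byzantine reinforcement: given a partition $R_1,\dots,R_k$ of $V$, set $V'=V\times[\ell]$, $v_i=(v,i)$, $P(v_i)=v$. For $e=(v,w)\in E$, $E'_e=\{(v_i,w_i): i\in[\ell]\}$ if $v,w$ lie in the same region, and $E'_e=\{(v_i,w_j): i,j\in[\ell]\}$ otherwise; $E'=\bigcup_e E'_e$. Each copy receives the environment input of its original. For $v'\in V'$ and $(w,P(v'))\in E$ let $N_{v'}(w)=\{w'\in V' : P(w')=w,\ (w',v')\in E'\}$. Algorithm $A'$: each $v'$ initializes local copies of the state of $P(v')$ as in $A$; in each round sends on each $(v',w')\in E'$ the message $P(v')$ would send on $(P(v'),P(w'))$ under $A$ according to its local state (an arbitrary message if it cannot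 compute it correctly); and updates its state as if $P(v')$ had received, from each in-neighbor $w$, the message sent by the majority of the nodes in $N_{v'}(w)$. *)

theory Defs
  imports Main "HOL-Library.Disjoint_Sets"
begin

(* A scheduling algorithm A on G=(V,E) is given by
   init  :: 'v => 's                         (initial state of each node)
   send  :: 'v => 'v => 's => 'i => 'm option (message, if any, node v sends on (v,w),
                                               given its state and this round's input)
   upd :: 'v => 's => 'i => ('v => 'm option) => 's
                                              (state update from state, input and the
                                               messages received from in-neighbours;
                                               None = no message)
   env   :: nat => 'v => 'i                   (environment input of node v in round r) *)

primrec exec ::
  "('v \<times> 'v) set \<Rightarrow> ('v \<Rightarrow> 's) \<Rightarrow> ('v \<Rightarrow> 'v \<Rightarrow> 's \<Rightarrow> 'i \<Rightarrow> 'm option) \<Rightarrow>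
   ('v \<Rightarrow> 's \<Rightarrow> 'i \<Rightarrow> ('v \<Rightarrow> 'm option) \<Rightarrow> 's) \<Rightarrow> (nat \<Rightarrow> 'v \<Rightarrow> 'i) \<Rightarrow> nat \<Rightarrow> 'v \<Rightarrow> 's"
where
  "exec E init send upd env 0 = init"
| "exec E init send upd env (Suc r) =
     (\<lambda>v. upd v (exec E init send upd env r v) (env r v)
        (\<lambda>w. if (w, v) \<in> E then send w v (exec E init send upd env r w) (env r w) else None))"

definition same_region :: "'v set set \<Rightarrow> 'v \<Rightarrow> 'v \<Rightarrow> bool" where
  "same_region Rs v w \<longleftrightarrow> (\<exists>R\<in>Rs. v \<in> R \<and> w \<in> R)"

definition reinf_nodes :: "'v set \<Rightarrow> nat \<Rightarrow> ('v \<times> nat) set" where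
  "reinf_nodes V l = V \<times> {1..l}"

definition reinf_edges :: "('v \<times> 'v) set \<Rightarrow> 'v set set \<Rightarrow> nat \<Rightarrow> (('v \<times> nat) \<times> ('v \<times> nat)) set" where
  "reinf_edges E Rs l = {((v, i), (w, j)). (v, w) \<in> E \<and> i \<in> {1..l} \<and> j \<in> {1..l} \<and>
                            (same_region Rs v w \<longrightarrow> i = j)}"

definition nbr_copies :: "'v set \<Rightarrow> ('v \<times> 'v) set \<Rightarrow> 'v set set \<Rightarrow> nat \<Rightarrow> 'v \<times> nat \<Rightarrow> 'v \<Rightarrow> ('v \<times> nat) set" where
  "nbr_copies V E Rs l v' w = {w' \<in> reinf_nodes V l. fst w' = w \<and> (w', v') \<in> reinf_edges E Rs l}"

(* st' r v' : state of node v' of G' at (the start of) round r;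
   msg r v' w' : message sent on the edge (v',w') of E' in round r.
   Non-faulty nodes (in V' - F) follow A'; faulty nodes are unconstrained (arbitrary states
   and arbitrary messages).  When no strict majority exists among N_{v'}(w), the value taken
   for w's message is arbitrary (any tie-breaking rule, even round/state dependent). *)
definition reinf_exec ::
  "'v set \<Rightarrow> ('v \<times> 'v) set \<Rightarrow> 'v set set \<Rightarrow> nat \<Rightarrow>
   ('v \<Rightarrow> 's) \<Rightarrow> ('v \<Rightarrow> 'v \<Rightarrow> 's \<Rightarrow> 'i \<Rightarrow> 'm option) \<Rightarrow>
   ('v \<Rightarrow> 's \<Rightarrow> 'i \<Rightarrow> ('v \<Rightarrow> 'm option) \<Rightarrow> 's) \<Rightarrow> (nat \<Rightarrow> 'v \<Rightarrow> 'i) \<Rightarrow>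
   ('v \<times> nat) set \<Rightarrow> (nat \<Rightarrow> 'v \<times> nat \<Rightarrow> 's) \<Rightarrow> (nat \<Rightarrow> 'v \<times> nat \<Rightarrow> 'v \<times> nat \<Rightarrow> 'm option) \<Rightarrow> bool"
where
  "reinf_exec V E Rs l init send upd env F st' msg \<longleftrightarrow>
     (\<forall>v' \<in> reinf_nodes V l - F. st' 0 v' = init (fst v')) \<and>
     (\<forall>r v' w'. (v', w') \<in> reinf_edges E Rs l \<longrightarrow> v' \<notin> F \<longrightarrow>
         msg r v' w' = send (fst v') (fst w') (st' r v') (env r (fst v'))) \<and>
     (\<forall>r. \<forall>v' \<in> reinf_nodes V l - F. \<exists>rcv.
         st' (Suc r) v' = upd (fst v') (st' r v') (env r (fst v')) rcv \<and>
         (\<forall>w. (w, fst v') \<notin> E \<longrightarrow> rcv w = None) \<and>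
         (\<forall>w m. (w, fst v') \<in> E \<longrightarrow>
             2 * card {w' \<in> nbr_copies V E Rs l v' w. msg r w' v' = m} > card (nbr_copies V E Rs l v' w)
             \<longrightarrow> rcv w = m))"

end

theory Submission
  imports Defs
begin

text \<open>Call an index \<open>i\<close> intact for a region \<open>R\<close> if no copy \<open>v\<^sub>i\<close> with \<open>v \<in> R\<close> is faulty.
  By induction on the round, every intact copy carries the fault-free state of its original:
  inside a region an intact copy only listens to the copy with the same index, which is intact
  as well; across regions it listens to all \<open>2f + 1\<close> copies of the sender, among which the
  \<open>f + 1\<close> intact ones already form a strict majority. Since every region has at least
  \<open>f + 1\<close> intact indices, a strict majority of the copies of each node is correct.\<close>

definition intact_copies :: "('v \<times> nat) set \<Rightarrow> nat \<Rightarrow> 'v set \<Rightarrow> nat set" where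
  "intact_copies F l R = {i \<in> {1..l}. {(v, i) | v. v \<in> R} \<inter> F = {}}"

lemma intact_copiesD:
  assumes "i \<in> intact_copies F l R" "v \<in> R"
  shows "(v, i) \<notin> F" "i \<in> {1..l}"
  using assms unfolding intact_copies_def by auto

lemma nbr_copies_same_region:
  assumes "(w, v) \<in> E" "w \<in> V" "i \<in> {1..l}" "same_region Rs w v"
  shows "nbr_copies V E Rs l (v, i) w = {(w, i)}"
  using assms unfolding nbr_copies_def reinf_nodes_def reinf_edges_def by auto

lemma nbr_copies_other_region:
  assumes "(w, v) \<in> E" "w \<in> V" "i \<in> {1..l}" "\<not> same_region Rs w v"
  shows "nbr_copies V E Rs l (v, i) w = {w} \<times> {1..l}"
  using assms unfolding nbr_copies_def reinf_nodes_def reinf_edges_def by auto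

lemma same_region_partition_on:
  assumes "partition_on V Rs" "R \<in> Rs" "v \<in> R" "same_region Rs w v"
  shows "w \<in> R"
  using assms disjointD[OF partition_onD2[OF assms(1)]] unfolding same_region_def by blast

locale reinforced_execution =
  fixes V :: "'v set" and E :: "('v \<times> 'v) set" and Rs :: "'v set set"
    and init :: "'v \<Rightarrow> 's" and send :: "'v \<Rightarrow> 'v \<Rightarrow> 's \<Rightarrow> 'i \<Rightarrow> 'm option"
    and upd :: "'v \<Rightarrow> 's \<Rightarrow> 'i \<Rightarrow> ('v \<Rightarrow> 'm option) \<Rightarrow> 's"
    and env :: "nat \<Rightarrow> 'v \<Rightarrow> 'i"
    and f l :: nat and F :: "('v \<times> nat) set"
    and st' :: "nat \<Rightarrow> 'v \<times> nat \<Rightarrow> 's" and msg :: "nat \<Rightarrow> 'v \<times> nat \<Rightarrow> 'v \<times> nat \<Rightarrow> 'm option"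
  assumes edges_in_nodes: "E \<subseteq> V \<times> V"
    and regions: "partition_on V Rs"
    and copies: "l = 2 * f + 1"
    and enough_intact: "\<And>R. R \<in> Rs \<Longrightarrow> f + 1 \<le> card (intact_copies F l R)"
    and execution: "reinf_exec V E Rs l init send upd env F st' msg"
begin

abbreviation fault_free :: "nat \<Rightarrow> 'v \<Rightarrow> 's" where
  "fault_free \<equiv> exec E init send upd env"

definition intact_copies_correct :: "nat \<Rightarrow> bool" where
  "intact_copies_correct r \<longleftrightarrow>
     (\<forall>R \<in> Rs. \<forall>v \<in> R. \<forall>i \<in> intact_copies F l R. st' r (v, i) = fault_free r v)"

lemma execution_init: "v' \<in> reinf_nodes V l - F \<Longrightarrow> st' 0 v' = init (fst v')"
  using execution unfolding reinf_exec_def by blast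

lemma execution_msg:
  "(v', w') \<in> reinf_edges E Rs l \<Longrightarrow> v' \<notin> F \<Longrightarrow>
    msg r v' w' = send (fst v') (fst w') (st' r v') (env r (fst v'))"
  using execution unfolding reinf_exec_def by blast

lemma execution_step:
  assumes "v' \<in> reinf_nodes V l - F"
  obtains rcv where "st' (Suc r) v' = upd (fst v') (st' r v') (env r (fst v')) rcv"
    and "\<And>w. (w, fst v') \<notin> E \<Longrightarrow> rcv w = None"
    and "\<And>w m. (w, fst v') \<in> E \<Longrightarrow>
      card (nbr_copies V E Rs l v' w)
        < 2 * card {w' \<in> nbr_copies V E Rs l v' w. msg r w' v' = m} \<Longrightarrow>
      rcv w = m"
  using execution assms that unfolding reinf_exec_def by blast

lemma intact_copy_node:
  assumes "R \<in> Rs" "v \<in> R" "i \<in> intact_copies F l R"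
  shows "(v, i) \<in> reinf_nodes V l - F"
  using intact_copiesD[OF assms(3,2)] assms(1,2) partition_onD1[OF regions]
  unfolding reinf_nodes_def by auto

lemma intact_copy_sends_fault_free_message:
  assumes "intact_copies_correct r" "R \<in> Rs" "w \<in> R" "j \<in> intact_copies F l R"
    and "((w, j), v') \<in> reinf_edges E Rs l"
  shows "msg r (w, j) v' = send w (fst v') (fault_free r w) (env r w)"
proof -
  have "msg r (w, j) v' = send w (fst v') (st' r (w, j)) (env r w)"
    using execution_msg[OF assms(5) intact_copiesD(1)[OF assms(4,3)]] by simp
  also have "st' r (w, j) = fault_free r w"
    using assms(1-4) unfolding intact_copies_correct_def by blast
  finally show ?thesis .
qed

lemma majority_sends_fault_free_message:
  assumes "intact_copies_correct r" "(w, v) \<in> E" "R \<in> Rs" "v \<in> R" "i \<in> intact_copies F l R"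
  defines "N \<equiv> nbr_copies V E Rs l (v, i) w"
  shows "card N < 2 * card {w' \<in> N. msg r w' (v, i) = send w v (fault_free r w) (env r w)}"
    (is "_ < 2 * card ?agree")
proof -
  have w: "w \<in> V" and i: "i \<in> {1..l}"
    using assms(2) edges_in_nodes intact_copiesD(2)[OF assms(5,4)] by auto
  have edge: "((w, j), (v, i)) \<in> reinf_edges E Rs l"
    if "j \<in> {1..l}" "same_region Rs w v \<longrightarrow> j = i" for j
    using that assms(2) i unfolding reinf_edges_def by auto
  show ?thesis
  proof (cases "same_region Rs w v")
    case True
    have "w \<in> R" using same_region_partition_on[OF regions assms(3,4) True] .
    then have "msg r (w, i) (v, i) = send w v (fault_free r w) (env r w)"
      using intact_copy_sends_fault_free_message[OF assms(1,3) _ assms(5) edge] i by auto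
    moreover have "N = {(w, i)}"
      using nbr_copies_same_region[OF assms(2) w i True] unfolding N_def .
    ultimately have "?agree = N" by auto
    then show ?thesis by (simp add: \<open>N = {(w, i)}\<close>)
  next
    case False
    have N: "N = {w} \<times> {1..l}"
      using nbr_copies_other_region[OF assms(2) w i False] unfolding N_def .
    obtain R' where R': "R' \<in> Rs" "w \<in> R'"
      using w partition_onD1[OF regions] by auto
    have "(w, j) \<in> ?agree" if j: "j \<in> intact_copies F l R'" for j
    proof -
      have "j \<in> {1..l}" using intact_copiesD(2)[OF j R'(2)] .
      then show ?thesis
        using intact_copy_sends_fault_free_message[OF assms(1) R' j edge] False N by simp
    qed
    then have "{w} \<times> intact_copies F l R' \<subseteq> ?agree" by blast
    then have "card ({w} \<times> intact_copies F l R') \<le> card ?agree"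
      by (intro card_mono) (simp_all add: N)
    then show ?thesis
      using enough_intact[OF R'(1)] copies
      by (simp add: N card_cartesian_product_singleton)
  qed
qed

lemma intact_copies_correct_Suc:
  assumes "intact_copies_correct r"
  shows "intact_copies_correct (Suc r)"
  unfolding intact_copies_correct_def
proof (intro ballI)
  fix R v i assume R: "R \<in> Rs" and v: "v \<in> R" and i: "i \<in> intact_copies F l R"
  obtain rcv where step: "st' (Suc r) (v, i) = upd v (st' r (v, i)) (env r v) rcv"
    and no_edge: "\<And>w. (w, v) \<notin> E \<Longrightarrow> rcv w = None"
    and majority: "\<And>w m. (w, v) \<in> E \<Longrightarrow>
      card (nbr_copies V E Rs l (v, i) w)
        < 2 * card {w' \<in> nbr_copies V E Rs l (v, i) w. msg r w' (v, i) = m} \<Longrightarrow>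
      rcv w = m"
    using execution_step[OF intact_copy_node[OF R v i]] by auto
  have "rcv = (\<lambda>w. if (w, v) \<in> E then send w v (fault_free r w) (env r w) else None)"
    using no_edge majority[OF _ majority_sends_fault_free_message[OF assms _ R v i]] by auto
  then show "st' (Suc r) (v, i) = fault_free (Suc r) v"
    using step assms R v i unfolding intact_copies_correct_def by simp
qed

lemma intact_copies_correct_always: "intact_copies_correct r"
proof (induction r)
  case 0
  show ?case
    using execution_init intact_copy_node unfolding intact_copies_correct_def by auto
next
  case (Suc r)
  then show ?case by (rule intact_copies_correct_Suc)
qed

lemma majority_of_copies_correct:
  assumes "v \<in> V"
  shows "l < 2 * card {i \<in> {1..l}. (v, i) \<notin> F \<and> st' r (v, i) = fault_free r v}"
proof -
  obtain R where R: "R \<in> Rs" "v \<in> R"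
    using assms partition_onD1[OF regions] by auto
  have "intact_copies F l R \<subseteq> {i \<in> {1..l}. (v, i) \<notin> F \<and> st' r (v, i) = fault_free r v}"
  proof
    fix i assume i: "i \<in> intact_copies F l R"
    have "st' r (v, i) = fault_free r v"
      using intact_copies_correct_always[of r] R i unfolding intact_copies_correct_def by blast
    then show "i \<in> {i \<in> {1..l}. (v, i) \<notin> F \<and> st' r (v, i) = fault_free r v}"
      using intact_copiesD[OF i R(2)] by blast
  qed
  then have "card (intact_copies F l R)
      \<le> card {i \<in> {1..l}. (v, i) \<notin> F \<and> st' r (v, i) = fault_free r v}"
    by (intro card_mono) auto
  then show ?thesis
    using enough_intact[OF R(1)] copies by linarith
qed

end

theorem lemma5:
  fixes V :: "'v set" and E :: "('v \<times> 'v) set" and Rs :: "'v set set"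
    and init :: "'v \<Rightarrow> 's" and send :: "'v \<Rightarrow> 'v \<Rightarrow> 's \<Rightarrow> 'i \<Rightarrow> 'm option"
    and upd :: "'v \<Rightarrow> 's \<Rightarrow> 'i \<Rightarrow> ('v \<Rightarrow> 'm option) \<Rightarrow> 's"
    and env :: "nat \<Rightarrow> 'v \<Rightarrow> 'i"
    and f l :: nat and F :: "('v \<times> nat) set"
    and st' :: "nat \<Rightarrow> 'v \<times> nat \<Rightarrow> 's" and msg :: "nat \<Rightarrow> 'v \<times> nat \<Rightarrow> 'v \<times> nat \<Rightarrow> 'm option"
  assumes "E \<subseteq> V \<times> V"
    and "partition_on V Rs"
    and "l = 2 * f + 1"
    and "F \<subseteq> reinf_nodes V l"
    and "\<forall>R \<in> Rs. card {i \<in> {1..l}. {(v, i) | v. v \<in> R} \<inter> F = {}} \<ge> f + 1"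
    and "reinf_exec V E Rs l init send upd env F st' msg"
  shows "\<forall>v \<in> V. \<forall>r. 2 * card {i \<in> {1..l}. (v, i) \<notin> F \<and> st' r (v, i) = exec E init send upd env r v} > l"
proof -
  interpret reinforced_execution V E Rs init send upd env f l F st' msg
    using assms(1-3,5,6) by unfold_locales (auto simp: intact_copies_def)
  show ?thesis
    using majority_of_copies_correct by blast
qed

end
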